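(* Let $L>0$, $C\subset\mathbb{R}^n$ a nonempty closed convex set and $(f,h)\in\mathcal{B}_L(C)$. Let $\{x_k\}_{k\ge0}$ be generated by NoLips with constant step size $\lambda\in(0,1/L]$ from $x_0\in\operatorname{int}\operatorname{dom}h$. Then for every $k\ge2$, \[ \min_{1\le i\le k}D_h(x_{i-1},x_i)\le\frac{2D_h(x_*,x_0)}{k(k-1)}, \] where $x_*\in\operatorname{argmin}_C f\cap\operatorname{dom}h$.
   Context: $h$ is Legendre with zone $C$ if it is closed convex proper, $\overline{\operatorname{dom}h}=C$, continuously differentiable and strictly convex on $\operatorname{int}\operatorname{dom}h\ne\emptyset$, and $\|\nabla h(x_k)\|\to\infty$ for every sequence in $\operatorname{int}\operatorname{dom}h$ converging to a boundary point of $\operatorname{dom}h$. $D_h(x,y)=h(x)-h(y)-\langle\nabla h(y),x-y\rangle$. $(f,h)\in\mathcal{B}_L(C)$ means: $h$ is Legendre with zone $C$; $f:\mathbb{R}^n\to\mathbb{R}\cup\{+\infty\}$ is closed convex proper with $\operatorname{dom}h\subset\operatorname{dom}f$, continuously differentiable on $\operatorname{int}\operatorname{dom}h$; for every $\lambda>0$, $x\in\operatorname{int}\operatorname{dom}h$, $p\in\mathbb{R}^n$ the problem $\min_u\langle p,u-x\rangle+\frac1\lambda D_h(u,x)$ has a unique minimizer lying in $\operatorname{int}\operatorname{dom}h$; $\inf_C f>-\infty$; some minimizer of $f$ on $C$ lies in $\operatorname{dom}h$; and $Lh-f$ is convex on $C$. NoLips iterates $x_{k+1}=\operatorname{argmin}_{u\in\mathbb{R}^n}\langle\nabla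 f(x_k),u-x_k\rangle+\frac1\lambda D_h(u,x_k)$. *)

theory Defs
  imports "HOL-Analysis.Analysis"
begin

definition edom :: "('a \<Rightarrow> ereal) \<Rightarrow> 'a set" where
  "edom f = {x. f x < \<infinity>}"

definition epigraph_e :: "('a \<Rightarrow> ereal) \<Rightarrow> ('a \<times> real) set" where
  "epigraph_e f = {(x, t). f x \<le> ereal t}"

definition proper_fun :: "('a \<Rightarrow> ereal) \<Rightarrow> bool" where
  "proper_fun f \<longleftrightarrow> (\<forall>x. f x \<noteq> -\<infinity>) \<and> (\<exists>x. f x \<noteq> \<infinity>)"

definition closed_convex_proper :: "('a::real_normed_vector \<Rightarrow> ereal) \<Rightarrow> bool" where
  "closed_convex_proper f \<longleftrightarrow>
     closed (epigraph_e f) \<and> convex (epigraph_e f) \<and> proper_fun f"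

definition has_gradient :: "('a::euclidean_space \<Rightarrow> ereal) \<Rightarrow> 'a \<Rightarrow> 'a \<Rightarrow> bool" where
  "has_gradient f g x \<longleftrightarrow> ((\<lambda>y. real_of_ereal (f y)) has_derivative (\<lambda>v. g \<bullet> v)) (at x)"

definition grad :: "('a::euclidean_space \<Rightarrow> ereal) \<Rightarrow> 'a \<Rightarrow> 'a" where
  "grad f x = (SOME g. has_gradient f g x)"

definition C1_on :: "('a::euclidean_space \<Rightarrow> ereal) \<Rightarrow> 'a set \<Rightarrow> bool" where
  "C1_on f S \<longleftrightarrow> (\<forall>x\<in>S. f x \<noteq> \<infinity> \<and> f x \<noteq> -\<infinity> \<and> (\<exists>g. has_gradient f g x))
                 \<and> continuous_on S (grad f)"

definition strictly_convex_on :: "'a set \<Rightarrow> ('a::real_vector \<Rightarrow> real) \<Rightarrow> bool" where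
  "strictly_convex_on S f \<longleftrightarrow> (\<forall>x\<in>S. \<forall>y\<in>S. \<forall>t. x \<noteq> y \<longrightarrow> 0 < t \<longrightarrow> t < 1 \<longrightarrow>
      f ((1 - t) *\<^sub>R x + t *\<^sub>R y) < (1 - t) * f x + t * f y)"

definition legendre :: "('a::euclidean_space \<Rightarrow> ereal) \<Rightarrow> 'a set \<Rightarrow> bool" where
  "legendre h C \<longleftrightarrow>
     closed_convex_proper h \<and> closure (edom h) = C \<and>
     interior (edom h) \<noteq> {} \<and>
     C1_on h (interior (edom h)) \<and>
     strictly_convex_on (interior (edom h)) (\<lambda>x. real_of_ereal (h x)) \<and>
     (\<forall>s b. (\<forall>j. s j \<in> interior (edom h)) \<longrightarrow> s \<longlonglongrightarrow> b \<longrightarrow> b \<in> frontier (edom h) \<longrightarrow>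
        filterlim (\<lambda>j. norm (grad h (s j))) at_top sequentially)"

definition bregman :: "('a::euclidean_space \<Rightarrow> ereal) \<Rightarrow> 'a \<Rightarrow> 'a \<Rightarrow> ereal" where
  "bregman h x y = h x - h y - ereal (grad h y \<bullet> (x - y))"

definition nolips_obj :: "('a::euclidean_space \<Rightarrow> ereal) \<Rightarrow> real \<Rightarrow> 'a \<Rightarrow> 'a \<Rightarrow> 'a \<Rightarrow> ereal" where
  "nolips_obj h lam p x u = ereal (p \<bullet> (u - x)) + ereal (1 / lam) * bregman h u x"

definition is_minimizer :: "('a \<Rightarrow> ereal) \<Rightarrow> 'a \<Rightarrow> bool" where
  "is_minimizer F u \<longleftrightarrow> (\<forall>v. F u \<le> F v)"

definition class_B :: "real \<Rightarrow> 'a set \<Rightarrow> ('a::euclidean_space \<Rightarrow> ereal) \<Rightarrow> ('a \<Rightarrow> ereal) \<Rightarrow> bool" where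
  "class_B L C f h \<longleftrightarrow>
     legendre h C \<and>
     closed_convex_proper f \<and> edom h \<subseteq> edom f \<and>
     C1_on f (interior (edom h)) \<and>
     (\<forall>lam>0. \<forall>x\<in>interior (edom h). \<forall>p.
        (\<exists>!u. is_minimizer (nolips_obj h lam p x) u) \<and>
        (\<forall>u. is_minimizer (nolips_obj h lam p x) u \<longrightarrow> u \<in> interior (edom h))) \<and>
     (INF x\<in>C. f x) > -\<infinity> \<and>
     (\<exists>x\<in>C \<inter> edom h. \<forall>y\<in>C. f x \<le> f y) \<and>
     convex_on (edom h) (\<lambda>x. L * real_of_ereal (h x) - real_of_ereal (f x))"

end

theory Submission
  imports Defs
begin

(* Convexity of L h - f yields the descent inequality f y <= f z + <grad f z, y - z> + L D_h(y, z).
   Together with the optimality condition grad h x_(k+1) = grad h x_k - lam grad f x_k of the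
   subproblem, the three-point identity of D_h and lam L <= 1, it gives for every u in dom h
     lam (f x_(k+1) - f u) <= D_h(u, x_k) - D_h(u, x_(k+1)).
   For u = x_k the steps D_h(x_k, x_(k+1)) are dominated by the decrease of lam f x_k; for u = x_*
   the gap lam (f x_(k+1) - f x_* ) is dominated by the decrease of D_h(x_*, x_k).  Summation by
   parts gives sum_(j=1..k-1) j D_h(x_j, x_(j+1)) <= D_h(x_*, x_0), and the smallest step is at most
   this bound divided by k(k-1)/2. *)

lemma convex_on_imp_above_tangent_plane:
  fixes F :: "'a::real_normed_vector \<Rightarrow> real"
  assumes convex: "convex_on S F" and "x \<in> S" "u \<in> S"
    and deriv: "(F has_derivative F') (at x)"
  shows "F x + F' (u - x) \<le> F u"
proof -
  define d where "d = u - x"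
  have "((\<lambda>t. x + t *\<^sub>R d) has_derivative (\<lambda>s. s *\<^sub>R d)) (at 0)"
    by (auto intro!: derivative_eq_intros)
  then have "((\<lambda>t. F (x + t *\<^sub>R d)) has_derivative (\<lambda>s. F' (s *\<^sub>R d))) (at 0)"
    by (rule has_derivative_compose) (use deriv in simp)
  moreover have "(\<lambda>s. F' (s *\<^sub>R d)) = (*) (F' d)"
    using linear_scale[OF has_derivative_linear[OF deriv]] by (simp add: fun_eq_iff mult.commute)
  ultimately have "((\<lambda>t. F (x + t *\<^sub>R d)) has_field_derivative F' d) (at 0)"
    by (simp add: has_field_derivative_def)
  then have lim: "((\<lambda>t. (F (x + t *\<^sub>R d) - F x) / t) \<longlongrightarrow> F' d) (at_right 0)"
    unfolding has_field_derivative_iff by (auto intro: tendsto_mono[OF at_le])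
  have "\<forall>\<^sub>F t in at_right 0. (F (x + t *\<^sub>R d) - F x) / t \<le> F u - F x"
    unfolding eventually_at_right_field
  proof (intro exI[of _ 1] conjI allI impI)
    fix t :: real
    assume "0 < t" "t < 1"
    moreover have "x + t *\<^sub>R d = (1 - t) *\<^sub>R x + t *\<^sub>R u"
      by (simp add: d_def algebra_simps)
    ultimately have "F (x + t *\<^sub>R d) \<le> (1 - t) * F x + t * F u"
      using convex_onD[OF convex, of t x u] \<open>x \<in> S\<close> \<open>u \<in> S\<close> by simp
    with \<open>0 < t\<close> show "(F (x + t *\<^sub>R d) - F x) / t \<le> F u - F x"
      by (simp add: divide_simps algebra_simps)
  qed simp
  then have "F' d \<le> F u - F x"
    by (rule tendsto_le[OF _ tendsto_const lim, rotated]) simp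
  then show ?thesis
    by (simp add: d_def)
qed

(* The ereal-valued bregman of the definitions agrees with this real version on dom h
   (bregman_eq_bregman_real); all estimates are carried out with the latter. *)
definition bregman_real :: "('a::real_inner \<Rightarrow> real) \<Rightarrow> ('a \<Rightarrow> 'a) \<Rightarrow> 'a \<Rightarrow> 'a \<Rightarrow> real" where
  "bregman_real H G u z = H u - H z - G z \<bullet> (u - z)"

lemma bregman_real_same [simp]: "bregman_real H G u u = 0"
  by (simp add: bregman_real_def)

lemma bregman_real_nonneg:
  assumes "convex_on S H" "u \<in> S" "z \<in> S"
    and "(H has_derivative (\<lambda>v. G z \<bullet> v)) (at z)"
  shows "0 \<le> bregman_real H G u z"
  using convex_on_imp_above_tangent_plane[OF assms(1,3,2,4)] by (simp add: bregman_real_def)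

lemma bregman_real_three_point:
  "bregman_real H G u z - bregman_real H G u y - bregman_real H G y z = (G y - G z) \<bullet> (u - y)"
  by (simp add: bregman_real_def algebra_simps inner_diff_left inner_diff_right)

lemma bregman_prox_stationary:
  fixes H :: "'a::real_inner \<Rightarrow> real"
  assumes "open S" "y \<in> S" "lam \<noteq> 0"
    and min: "\<And>u. u \<in> S \<Longrightarrow>
      p \<bullet> (y - z) + (1 / lam) * bregman_real H G y z \<le> p \<bullet> (u - z) + (1 / lam) * bregman_real H G u z"
    and deriv: "(H has_derivative (\<lambda>v. G y \<bullet> v)) (at y)"
  shows "G y = G z - lam *\<^sub>R p"
proof -
  define c where "c = 1 / lam"
  define w where "w = p + c *\<^sub>R (G y - G z)"
  have "((\<lambda>u. p \<bullet> (u - z) + c * bregman_real H G u z) has_derivative (\<lambda>v. w \<bullet> v)) (at y)"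
    unfolding bregman_real_def
    by (rule has_derivative_eq_rhs, (auto intro!: derivative_eq_intros deriv)[1])
      (simp add: w_def fun_eq_iff algebra_simps inner_add_left inner_diff_left inner_diff_right)
  then have "(\<lambda>v. w \<bullet> v) = (\<lambda>v. 0)"
    using differential_zero_maxmin[OF \<open>y \<in> S\<close> \<open>open S\<close>] min unfolding c_def by blast
  then have "w = 0"
    by (metis inner_eq_zero_iff)
  moreover have "lam *\<^sub>R w = lam *\<^sub>R p + (G y - G z)"
    using \<open>lam \<noteq> 0\<close> by (simp add: w_def c_def scaleR_add_right)
  ultimately have "lam *\<^sub>R p + (G y - G z) = 0"
    by simp
  then show ?thesis
    by (simp add: algebra_simps eq_diff_eq)
qed

lemma relatively_smooth_descent:
  fixes H F :: "'a::real_inner \<Rightarrow> real"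
  assumes "convex_on S (\<lambda>u. L * H u - F u)" "z \<in> S" "y \<in> S"
    and dH: "(H has_derivative (\<lambda>v. G z \<bullet> v)) (at z)"
    and dF: "(F has_derivative (\<lambda>v. g \<bullet> v)) (at z)"
  shows "F y \<le> F z + g \<bullet> (y - z) + L * bregman_real H G y z"
proof -
  have "((\<lambda>u. L * H u - F u) has_derivative (\<lambda>v. (L *\<^sub>R G z - g) \<bullet> v)) (at z)"
    by (rule has_derivative_eq_rhs, (auto intro!: derivative_eq_intros dH dF)[1])
      (simp add: fun_eq_iff algebra_simps inner_diff_left)
  from convex_on_imp_above_tangent_plane[OF assms(1-3) this] show ?thesis
    by (simp add: bregman_real_def algebra_simps inner_diff_left)
qed

lemma bregman_gradient_step_le:
  fixes H F :: "'a::real_inner \<Rightarrow> real"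
  assumes "convex_on S H" "convex_on S F" "convex_on S (\<lambda>u. L * H u - F u)"
    and "z \<in> S" "y \<in> S" "u \<in> S"
    and dH: "(H has_derivative (\<lambda>v. G z \<bullet> v)) (at z)"
    and dF: "(F has_derivative (\<lambda>v. g \<bullet> v)) (at z)"
    and step: "G y = G z - lam *\<^sub>R g"
    and "0 \<le> lam" "lam * L \<le> 1"
  shows "lam * (F y - F u) \<le> bregman_real H G u z - bregman_real H G u y"
proof -
  have descent: "F y \<le> F z + g \<bullet> (y - z) + L * bregman_real H G y z"
    using relatively_smooth_descent[where G = G, OF assms(3-5) dH dF] .
  have tangent: "F z + g \<bullet> (u - z) \<le> F u"
    using convex_on_imp_above_tangent_plane[OF assms(2,4,6) dF] .
  have D_nonneg: "0 \<le> bregman_real H G y z"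
    using bregman_real_nonneg[where G = G, OF assms(1,5,4) dH] .
  have "lam * (F y - F u) \<le> lam * (g \<bullet> (y - u)) + lam * L * bregman_real H G y z"
    using mult_left_mono[OF add_mono[OF descent tangent] \<open>0 \<le> lam\<close>]
    by (simp add: algebra_simps inner_diff_right)
  also have "\<dots> \<le> lam * (g \<bullet> (y - u)) + bregman_real H G y z"
    using mult_right_mono[OF \<open>lam * L \<le> 1\<close> D_nonneg] by simp
  also have "\<dots> = bregman_real H G u z - bregman_real H G u y"
    using bregman_real_three_point[of H G u z y] step
    by (simp add: algebra_simps inner_diff_left inner_diff_right)
  finally show ?thesis .
qed

lemma weighted_sum_le_of_telescoping:
  fixes a b E :: "nat \<Rightarrow> real"
  assumes a: "\<And>j. a j \<le> b j - b (Suc j)"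
    and b: "\<And>j. b (Suc j) \<le> E j - E (Suc j)"
    and "\<And>j. 0 \<le> b j" "\<And>j. 0 \<le> E j"
  shows "(\<Sum>j=1..m. real j * a j) \<le> E 0"
proof -
  have "(\<Sum>j=1..m. real j * a j) + real m * b (Suc m) + E m \<le> E 0"
  proof (induction m)
    case (Suc m)
    have "real (Suc m) * a (Suc m) \<le> real (Suc m) * (b (Suc m) - b (Suc (Suc m)))"
      using a by (intro mult_left_mono) auto
    with Suc.IH b[of m] show ?case
      by (simp add: algebra_simps)
  qed simp
  moreover have "0 \<le> real m * b (Suc m)"
    using assms(3) by simp
  ultimately show ?thesis
    using assms(4)[of m] by linarith
qed

lemma exists_le_of_weighted_sum_le:
  fixes a :: "nat \<Rightarrow> real"
  assumes "(\<Sum>j=1..m. real j * a j) \<le> B" "1 \<le> m"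
  shows "\<exists>j\<in>{1..m}. a j \<le> 2 * B / (real m * (real m + 1))"
proof (rule ccontr)
  let ?c = "2 * B / (real m * (real m + 1))"
  assume "\<not> (\<exists>j\<in>{1..m}. a j \<le> ?c)"
  then have "(\<Sum>j=1..m. real j * ?c) < (\<Sum>j=1..m. real j * a j)"
    using \<open>1 \<le> m\<close> by (intro sum_strict_mono mult_strict_left_mono) (auto simp: not_le)
  also have "(\<Sum>j=1..m. real j * ?c) = (\<Sum>j=1..m. real j) * ?c"
    by (rule sum_distrib_right[symmetric])
  also have "\<dots> = B"
  proof -
    have "2 * (\<Sum>j=1..m. real j) = real m * (real m + 1)"
      using double_gauss_sum_from_Suc_0[where 'a = real, of m] by simp
    moreover have "real m * (real m + 1) \<noteq> 0"
      using \<open>1 \<le> m\<close> by simp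
    ultimately show ?thesis
      by (simp add: field_simps)
  qed
  finally show False
    using assms(1) by simp
qed

lemma closed_convex_proper_finite:
  assumes "closed_convex_proper F" "a \<in> edom F"
  obtains r where "F a = ereal r"
proof -
  have "F a \<noteq> -\<infinity>" "F a \<noteq> \<infinity>"
    using assms unfolding closed_convex_proper_def proper_fun_def edom_def by auto
  then show ?thesis
    using that by (cases "F a") auto
qed

lemma closed_convex_proper_convex_on:
  fixes F :: "'a::real_normed_vector \<Rightarrow> ereal"
  assumes "closed_convex_proper F"
  shows "convex_on (edom F) (\<lambda>x. real_of_ereal (F x))"
proof -
  have segment: "(1 - t) *\<^sub>R a + t *\<^sub>R b \<in> edom F \<and>
      real_of_ereal (F ((1 - t) *\<^sub>R a + t *\<^sub>R b)) \<le> (1 - t) * real_of_ereal (F a) + t * real_of_ereal (F b)"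
    if ab_dom: "a \<in> edom F" "b \<in> edom F" and t: "0 \<le> t" "t \<le> 1" for a b t
  proof -
    obtain ra rb where ab: "F a = ereal ra" "F b = ereal rb"
      using closed_convex_proper_finite[OF assms] ab_dom by metis
    have "convex (epigraph_e F)"
      using assms by (simp add: closed_convex_proper_def)
    moreover have "(a, ra) \<in> epigraph_e F" "(b, rb) \<in> epigraph_e F"
      using ab by (simp_all add: epigraph_e_def)
    ultimately have "(1 - t) *\<^sub>R (a, ra) + t *\<^sub>R (b, rb) \<in> epigraph_e F"
      using t by (rule convexD_alt)
    then have "F ((1 - t) *\<^sub>R a + t *\<^sub>R b) \<le> ereal ((1 - t) * ra + t * rb)"
      by (simp add: epigraph_e_def)
    moreover have "F ((1 - t) *\<^sub>R a + t *\<^sub>R b) \<noteq> -\<infinity>"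
      using assms by (simp add: closed_convex_proper_def proper_fun_def)
    ultimately show ?thesis
      using ab by (cases "F ((1 - t) *\<^sub>R a + t *\<^sub>R b)") (auto simp: edom_def)
  qed
  then have "convex (edom F)"
    by (simp add: convex_alt)
  with segment show ?thesis
    by (intro convex_onI) auto
qed

lemma closed_convex_proper_real_mono:
  assumes "closed_convex_proper F" "u \<in> edom F" "v \<in> edom F" "F u \<le> F v"
  shows "real_of_ereal (F u) \<le> real_of_ereal (F v)"
proof -
  obtain a b where "F u = ereal a" "F v = ereal b"
    using closed_convex_proper_finite assms(1-3) by metis
  with assms(4) show ?thesis
    by simp
qed

lemma C1_on_has_derivative_grad:
  assumes "C1_on F S" "z \<in> S"
  shows "((\<lambda>y. real_of_ereal (F y)) has_derivative (\<lambda>v. grad F z \<bullet> v)) (at z)"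
proof -
  have "\<exists>g. has_gradient F g z"
    using assms unfolding C1_on_def by blast
  then have "has_gradient F (grad F z) z"
    unfolding grad_def by (rule someI_ex)
  then show ?thesis
    unfolding has_gradient_def .
qed

lemma bregman_eq_bregman_real:
  assumes "closed_convex_proper h" "u \<in> edom h" "z \<in> edom h"
  shows "bregman h u z = ereal (bregman_real (\<lambda>x. real_of_ereal (h x)) (grad h) u z)"
proof -
  obtain a b where "h u = ereal a" "h z = ereal b"
    using closed_convex_proper_finite assms by metis
  then show ?thesis
    by (simp add: bregman_def bregman_real_def)
qed

lemma legendre_bregman_real_nonneg:
  assumes "legendre h C" "u \<in> edom h" "z \<in> interior (edom h)"
  shows "0 \<le> bregman_real (\<lambda>x. real_of_ereal (h x)) (grad h) u z"
proof (rule bregman_real_nonneg)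
  show "convex_on (edom h) (\<lambda>x. real_of_ereal (h x))"
    using assms(1) closed_convex_proper_convex_on unfolding legendre_def by blast
  show "z \<in> edom h"
    using assms(3) interior_subset by blast
  show "((\<lambda>x. real_of_ereal (h x)) has_derivative (\<lambda>v. grad h z \<bullet> v)) (at z)"
    using assms(1,3) C1_on_has_derivative_grad unfolding legendre_def by blast
qed fact

lemma class_B_nolips_step_interior:
  assumes "class_B L C f h" "0 < lam" "z \<in> interior (edom h)"
    and "is_minimizer (nolips_obj h lam p z) y"
  shows "y \<in> interior (edom h)"
  using assms unfolding class_B_def by blast

lemma class_B_nolips_step_le:
  fixes f h :: "'a::euclidean_space \<Rightarrow> ereal"
  assumes B: "class_B L C f h" and "0 < lam" "lam * L \<le> 1"
    and z: "z \<in> interior (edom h)"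
    and y: "is_minimizer (nolips_obj h lam (grad f z) z) y"
    and u: "u \<in> edom h"
  shows "lam * (real_of_ereal (f y) - real_of_ereal (f u))
    \<le> bregman_real (\<lambda>x. real_of_ereal (h x)) (grad h) u z
      - bregman_real (\<lambda>x. real_of_ereal (h x)) (grad h) u y"
proof -
  let ?D = "bregman_real (\<lambda>x. real_of_ereal (h x)) (grad h)"
  let ?S = "interior (edom h)"
  have h: "closed_convex_proper h" "C1_on h ?S"
    and f: "closed_convex_proper f" "C1_on f ?S" "edom h \<subseteq> edom f"
    and rel: "convex_on (edom h) (\<lambda>x. L * real_of_ereal (h x) - real_of_ereal (f x))"
    using B unfolding class_B_def legendre_def by blast+
  have y_int: "y \<in> ?S"
    using class_B_nolips_step_interior[OF B \<open>0 < lam\<close> z y] .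
  have zy_dom: "z \<in> edom h" "y \<in> edom h"
    using z y_int interior_subset by blast+
  have h_conv: "convex_on (edom h) (\<lambda>x. real_of_ereal (h x))"
    using closed_convex_proper_convex_on[OF h(1)] .
  have f_conv: "convex_on (edom h) (\<lambda>x. real_of_ereal (f x))"
    using convex_on_subset[OF closed_convex_proper_convex_on[OF f(1)] f(3) convex_on_imp_convex[OF h_conv]] .
  have obj: "nolips_obj h lam (grad f z) z v = ereal (grad f z \<bullet> (v - z) + (1 / lam) * ?D v z)"
    if "v \<in> edom h" for v
    using bregman_eq_bregman_real[OF h(1) that zy_dom(1)]
    by (simp add: nolips_obj_def)
  have "grad h y = grad h z - lam *\<^sub>R grad f z"
  proof (rule bregman_prox_stationary[OF open_interior y_int])
    show "grad f z \<bullet> (y - z) + 1 / lam * ?D y z \<le> grad f z \<bullet> (v - z) + 1 / lam * ?D v z"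
      if "v \<in> ?S" for v
    proof -
      have "v \<in> edom h"
        using that interior_subset by blast
      moreover have "nolips_obj h lam (grad f z) z y \<le> nolips_obj h lam (grad f z) z v"
        using y unfolding is_minimizer_def ..
      ultimately show ?thesis
        using obj[OF zy_dom(2)] obj[of v] by simp
    qed
  qed (use \<open>0 < lam\<close> C1_on_has_derivative_grad[OF h(2) y_int] in auto)
  then show ?thesis
    using bregman_gradient_step_le[where G = "grad h", OF h_conv f_conv rel zy_dom u
        C1_on_has_derivative_grad[OF h(2) z] C1_on_has_derivative_grad[OF f(2) z]] \<open>0 < lam\<close> \<open>lam * L \<le> 1\<close>
    by simp
qed

lemma nolips_iterates_interior:
  assumes "class_B L C f h" "0 < lam" "x 0 \<in> interior (edom h)"
    and "\<And>k. is_minimizer (nolips_obj h lam (grad f (x k)) (x k)) (x (Suc k))"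
  shows "x j \<in> interior (edom h)"
  by (induction j) (use class_B_nolips_step_interior[OF assms(1,2)] assms(3,4) in blast)+

lemma nolips_weighted_bregman_sum_le:
  fixes f h :: "'a::euclidean_space \<Rightarrow> ereal"
  assumes B: "class_B L C f h" and "0 < lam" "lam * L \<le> 1"
    and x0: "x 0 \<in> interior (edom h)"
    and iter: "\<And>k. is_minimizer (nolips_obj h lam (grad f (x k)) (x k)) (x (Suc k))"
    and xs: "xs \<in> C \<inter> edom h" and xs_min: "\<forall>y\<in>C. f xs \<le> f y"
  shows "(\<Sum>j=1..m. real j * bregman_real (\<lambda>x. real_of_ereal (h x)) (grad h) (x j) (x (Suc j)))
    \<le> bregman_real (\<lambda>x. real_of_ereal (h x)) (grad h) xs (x 0)"
proof -
  let ?D = "bregman_real (\<lambda>x. real_of_ereal (h x)) (grad h)"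
  let ?F = "\<lambda>x. real_of_ereal (f x)"
  have h: "legendre h C" "closure (edom h) = C"
    and f: "closed_convex_proper f" "edom h \<subseteq> edom f"
    using B unfolding class_B_def legendre_def by blast+
  have interior: "x j \<in> interior (edom h)" for j
    using nolips_iterates_interior[OF B \<open>0 < lam\<close> x0 iter] .
  note step = class_B_nolips_step_le[OF B \<open>0 < lam\<close> \<open>lam * L \<le> 1\<close> interior iter]
  show ?thesis
  proof (rule weighted_sum_le_of_telescoping)
    show "?D (x j) (x (Suc j)) \<le> lam * (?F (x j) - ?F xs) - lam * (?F (x (Suc j)) - ?F xs)" for j
      using step[of "x j" j] interior[of j] interior_subset by (force simp: algebra_simps)
    show "lam * (?F (x (Suc j)) - ?F xs) \<le> ?D xs (x j) - ?D xs (x (Suc j))" for j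
      using step[of xs j] xs by simp
    show "0 \<le> lam * (?F (x j) - ?F xs)" for j
    proof -
      have "x j \<in> edom h" "x j \<in> C"
        using interior[of j] interior_subset closure_subset h(2) by blast+
      then have "?F xs \<le> ?F (x j)"
        using closed_convex_proper_real_mono[OF f(1), of xs "x j"] xs xs_min f(2) by blast
      with \<open>0 < lam\<close> show ?thesis
        by simp
    qed
    show "0 \<le> ?D xs (x j)" for j
      using legendre_bregman_real_nonneg[OF h(1)] xs interior by blast
  qed
qed

theorem proposition4p6:
  fixes f h :: "'a::euclidean_space \<Rightarrow> ereal"
    and C :: "'a set" and L lam :: real and x :: "nat \<Rightarrow> 'a"
  assumes "L > 0"
    and "C \<noteq> {}" and "closed C" and "convex C"
    and "class_B L C f h"
    and "0 < lam" and "lam \<le> 1 / L"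
    and "x 0 \<in> interior (edom h)"
    and "\<And>k. is_minimizer (nolips_obj h lam (grad f (x k)) (x k)) (x (Suc k))"
  shows "\<forall>xs \<in> C \<inter> edom h. (\<forall>y\<in>C. f xs \<le> f y) \<longrightarrow>
           (\<forall>k\<ge>2. (MIN i\<in>{1..k}. bregman h (x (i - 1)) (x i))
                   \<le> ereal 2 * bregman h xs (x 0) / ereal (real k * (real k - 1)))"
proof (intro ballI impI allI)
  fix xs :: 'a and k :: nat
  assume xs: "xs \<in> C \<inter> edom h" "\<forall>y\<in>C. f xs \<le> f y" and "2 \<le> k"
  let ?D = "bregman_real (\<lambda>x. real_of_ereal (h x)) (grad h)"
  have h: "closed_convex_proper h"
    using assms(5) unfolding class_B_def legendre_def by blast
  have dom: "x j \<in> edom h" for j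
    using nolips_iterates_interior[OF assms(5,6,8,9)] interior_subset by blast
  have "lam * L \<le> 1"
    using assms(1,7) by (simp add: field_simps)
  then have "\<exists>j\<in>{1..k-1}. ?D (x j) (x (Suc j)) \<le> 2 * ?D xs (x 0) / (real (k-1) * (real (k-1) + 1))"
    by (intro exists_le_of_weighted_sum_le nolips_weighted_bregman_sum_le[OF assms(5,6) _ assms(8,9) xs])
      (use \<open>2 \<le> k\<close> in auto)
  then obtain j where "j \<in> {1..k-1}" and j: "?D (x j) (x (Suc j)) \<le> 2 * ?D xs (x 0) / (real k * (real k - 1))"
    using \<open>2 \<le> k\<close> by (auto simp: of_nat_diff algebra_simps)
  have "(MIN i\<in>{1..k}. bregman h (x (i - 1)) (x i)) \<le> bregman h (x j) (x (Suc j))"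
    using \<open>j \<in> {1..k-1}\<close> by (intro Min_le) (auto intro!: image_eqI[of _ _ "Suc j"])
  also have "\<dots> \<le> ereal (2 * ?D xs (x 0) / (real k * (real k - 1)))"
    using j bregman_eq_bregman_real[OF h dom dom] by simp
  also have "\<dots> = ereal 2 * bregman h xs (x 0) / ereal (real k * (real k - 1))"
    using bregman_eq_bregman_real[OF h _ dom, of xs 0] xs \<open>2 \<le> k\<close> by simp
  finally show "(MIN i\<in>{1..k}. bregman h (x (i - 1)) (x i))
      \<le> ereal 2 * bregman h xs (x 0) / ereal (real k * (real k - 1))" .
qed

end
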